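(* Consider the setting and framework in the context with $\alpha_k=\frac{H+1}{H+k}$. Let $w_t=\alpha_t/\alpha_t^1$ for $t\ge1$ and fix $\eta>0$. Let the policies be generated by weighted Hedge/FTRL: $\mu_h^1(\cdot|s)$, $\nu_h^1(\cdot|s)$ uniform, and for $k\ge2$, $$\mu_h^k(a|s)\propto\exp\Big(\frac{\eta}{w_{k-1}}\sum_{t=1}^{k-1}w_t\sum_b\nu_h^t(b|s)Q_h^t(s,a,b)\Big),\quad \nu_h^k(b|s)\propto\exp\Big(-\frac{\eta}{w_{k-1}}\sum_{t=1}^{k-1}w_t\sum_a\mu_h^t(a|s)Q_h^t(s,a,b)\Big).$$ Then for all $k\ge1$ and $h\in[H]$, $$\mathrm{reg}_h^k\le\frac{(H+1)\max\{\log A,\log B\}}{\eta k}+\frac{\eta H^2}{2},$$ and with weights $\beta_k^t=\alpha_k^t$, $\overline{\mathrm{reg}}_h^k\le 2\Big(\frac{(H+1)\max\{\log A,\log B\}}{\eta k}+\frac{\eta H^2}{2}\Big)$.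
   Context: Setting. A finite-horizon two-player zero-sum Markov game with finite state set $\mathcal S$, finite action sets $\mathcal A$ (max-player, $A=|\mathcal A|$) and $\mathcal B$ (min-player, $B=|\mathcal B|$), horizon $H\ge 1$, reward functions $r_h:\mathcal S\times\mathcal A\times\mathcal B\to[0,1]$ and transition kernels $\mathbb P_h(\cdot\mid s,a,b)$ on $\mathcal S$, $h\in[H]$. For $Q:\mathcal A\times\mathcal B\to\mathbb R$, $x\in\Delta_{\mathcal A}$, $y\in\Delta_{\mathcal B}$, write $\langle Q,x\times y\rangle=\sum_{a,b}x(a)y(b)Q(a,b)$. Framework. Given learning rates $\alpha_k\in(0,1]$ ($k\ge1$) with $\alpha_1=1$ and Markov policies $\mu_h^k(\cdot\mid s)\in\Delta_{\mathcal A}$, $\nu_h^k(\cdot\mid s)\in\Delta_{\mathcal B}$ ($k\ge1$, $h\in[H]$, $s\in\mathcal S$), define $Q_{H+1}^k\equiv 0$ for all $k$, $Q_h^0\equiv H-h+1$, and for $k\ge1$, $h=H,\dots,1$: $$Q_h^k(s,a,b)=(1-\alpha_k)Q_h^{k-1}(s,a,b)+\alpha_k\Big(r_h(s,a,b)+\sum_{s'}\mathbb P_h(s'\mid s,a,b)\langle Q_{h+1}^k(s',\cdot,\cdot),\mu_{h+1}^k(\cdot\mid s')\times\nu_{h+1}^k(\cdot\mid s')\rangle\Big)$$ (for $h=H$ the inner product term is $0$). Let $\alpha_k^t=\alpha_t\prod_{j=t+1}^k(1-\alpha_j)$ for $1\le t\le k$. Weighted regrets: for $h\in[H]$, $\mathrm{reg}_{h,\mu}^k(s)=\max_{z\in\Delta_{\mathcal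 A}}\sum_{t=1}^k\alpha_k^t\langle Q_h^t(s,\cdot,\cdot),z\times\nu_h^t(\cdot|s)\rangle-\sum_{t=1}^k\alpha_k^t\langle Q_h^t(s,\cdot,\cdot),\mu_h^t(\cdot|s)\times\nu_h^t(\cdot|s)\rangle$, $\mathrm{reg}_{h,\nu}^k(s)=\sum_{t=1}^k\alpha_k^t\langle Q_h^t(s,\cdot,\cdot),\mu_h^t(\cdot|s)\times\nu_h^t(\cdot|s)\rangle-\min_{z\in\Delta_{\mathcal B}}\sum_{t=1}^k\alpha_k^t\langle Q_h^t(s,\cdot,\cdot),\mu_h^t(\cdot|s)\times z\rangle$, $\mathrm{reg}_h^k=\max_{s}\max\{\mathrm{reg}_{h,\mu}^k(s),\mathrm{reg}_{h,\nu}^k(s)\}$. Given weights $\beta_k^t\ge0$ with $\sum_{t=1}^k\beta_k^t=1$, define $\overline{\mathrm{reg}}_{h,\mu}^k(s),\overline{\mathrm{reg}}_{h,\nu}^k(s)$ exactly as $\mathrm{reg}_{h,\mu}^k(s),\mathrm{reg}_{h,\nu}^k(s)$ but with $\alpha_k^t$ replaced by $\beta_k^t$, and $\overline{\mathrm{reg}}_h^k=\max_s\big(\overline{\mathrm{reg}}_{h,\mu}^k(s)+\overline{\mathrm{reg}}_{h,\nu}^k(s)\big)$. *)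

theory Defs
  imports Complex_Main
begin

definition lr :: "nat \<Rightarrow> nat \<Rightarrow> real" where
  "lr H k = (real H + 1) / (real H + real k)"

definition lrw :: "nat \<Rightarrow> nat \<Rightarrow> nat \<Rightarrow> real" where
  "lrw H k t = lr H t * (\<Prod>j\<in>{t+1..k}. (1 - lr H j))"

definition wgt :: "nat \<Rightarrow> nat \<Rightarrow> real" where
  "wgt H t = lr H t / lrw H t 1"

definition simplex :: "('x::finite \<Rightarrow> real) set" where
  "simplex = {z. (\<forall>x. 0 \<le> z x) \<and> sum z UNIV = 1}"

definition pay :: "('a::finite \<Rightarrow> 'b::finite \<Rightarrow> real) \<Rightarrow> ('a \<Rightarrow> real) \<Rightarrow> ('b \<Rightarrow> real) \<Rightarrow> real" where
  "pay Q x y = (\<Sum>a\<in>UNIV. \<Sum>b\<in>UNIV. x a * y b * Q a b)"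

definition regmu :: "(nat \<Rightarrow> nat \<Rightarrow> real) \<Rightarrow> (nat \<Rightarrow> nat \<Rightarrow> 's \<Rightarrow> 'a::finite \<Rightarrow> 'b::finite \<Rightarrow> real)
   \<Rightarrow> (nat \<Rightarrow> nat \<Rightarrow> 's \<Rightarrow> 'a \<Rightarrow> real) \<Rightarrow> (nat \<Rightarrow> nat \<Rightarrow> 's \<Rightarrow> 'b \<Rightarrow> real) \<Rightarrow> nat \<Rightarrow> nat \<Rightarrow> 's \<Rightarrow> real" where
  "regmu wt Q mu nu k h s =
     (SUP z\<in>simplex. (\<Sum>t=1..k. wt k t * pay (Q t h s) z (nu t h s)))
     - (\<Sum>t=1..k. wt k t * pay (Q t h s) (mu t h s) (nu t h s))"

definition regnu :: "(nat \<Rightarrow> nat \<Rightarrow> real) \<Rightarrow> (nat \<Rightarrow> nat \<Rightarrow> 's \<Rightarrow> 'a::finite \<Rightarrow> 'b::finite \<Rightarrow> real)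
   \<Rightarrow> (nat \<Rightarrow> nat \<Rightarrow> 's \<Rightarrow> 'a \<Rightarrow> real) \<Rightarrow> (nat \<Rightarrow> nat \<Rightarrow> 's \<Rightarrow> 'b \<Rightarrow> real) \<Rightarrow> nat \<Rightarrow> nat \<Rightarrow> 's \<Rightarrow> real" where
  "regnu wt Q mu nu k h s =
     (\<Sum>t=1..k. wt k t * pay (Q t h s) (mu t h s) (nu t h s))
     - (INF z\<in>simplex. (\<Sum>t=1..k. wt k t * pay (Q t h s) (mu t h s) z))"

definition reg :: "(nat \<Rightarrow> nat \<Rightarrow> real) \<Rightarrow> (nat \<Rightarrow> nat \<Rightarrow> 's::finite \<Rightarrow> 'a::finite \<Rightarrow> 'b::finite \<Rightarrow> real)
   \<Rightarrow> (nat \<Rightarrow> nat \<Rightarrow> 's \<Rightarrow> 'a \<Rightarrow> real) \<Rightarrow> (nat \<Rightarrow> nat \<Rightarrow> 's \<Rightarrow> 'b \<Rightarrow> real) \<Rightarrow> nat \<Rightarrow> nat \<Rightarrow> real" where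
  "reg wt Q mu nu k h = Max (range (\<lambda>s. max (regmu wt Q mu nu k h s) (regnu wt Q mu nu k h s)))"

definition regbar :: "(nat \<Rightarrow> nat \<Rightarrow> real) \<Rightarrow> (nat \<Rightarrow> nat \<Rightarrow> 's::finite \<Rightarrow> 'a::finite \<Rightarrow> 'b::finite \<Rightarrow> real)
   \<Rightarrow> (nat \<Rightarrow> nat \<Rightarrow> 's \<Rightarrow> 'a \<Rightarrow> real) \<Rightarrow> (nat \<Rightarrow> nat \<Rightarrow> 's \<Rightarrow> 'b \<Rightarrow> real) \<Rightarrow> nat \<Rightarrow> nat \<Rightarrow> real" where
  "regbar beta Q mu nu k h = Max (range (\<lambda>s. regmu beta Q mu nu k h s + regnu beta Q mu nu k h s))"

definition logit_mu :: "nat \<Rightarrow> real \<Rightarrow> (nat \<Rightarrow> nat \<Rightarrow> 's \<Rightarrow> 'a \<Rightarrow> 'b::finite \<Rightarrow> real)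
   \<Rightarrow> (nat \<Rightarrow> nat \<Rightarrow> 's \<Rightarrow> 'b \<Rightarrow> real) \<Rightarrow> nat \<Rightarrow> nat \<Rightarrow> 's \<Rightarrow> 'a \<Rightarrow> real" where
  "logit_mu H eta Q nu k h s a =
     eta / wgt H (k-1) * (\<Sum>t=1..k-1. wgt H t * (\<Sum>b\<in>UNIV. nu t h s b * Q t h s a b))"

definition logit_nu :: "nat \<Rightarrow> real \<Rightarrow> (nat \<Rightarrow> nat \<Rightarrow> 's \<Rightarrow> 'a::finite \<Rightarrow> 'b \<Rightarrow> real)
   \<Rightarrow> (nat \<Rightarrow> nat \<Rightarrow> 's \<Rightarrow> 'a \<Rightarrow> real) \<Rightarrow> nat \<Rightarrow> nat \<Rightarrow> 's \<Rightarrow> 'b \<Rightarrow> real" where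
  "logit_nu H eta Q mu k h s b =
     - eta / wgt H (k-1) * (\<Sum>t=1..k-1. wgt H t * (\<Sum>a\<in>UNIV. mu t h s a * Q t h s a b))"

end

theory Submission
  imports Defs "HOL-Probability.Hoeffding" "HOL-Analysis.Harmonic_Numbers"
begin

text \<open>Unrolling the learning rates gives \<open>\<alpha>\<^sub>k\<^sup>t = \<alpha>\<^sub>k\<^sup>1 w\<^sub>t\<close>, so at every state each player's
  weighted regret is \<open>\<alpha>\<^sub>k\<^sup>1\<close> times the regret of Hedge run with the increasing weights \<open>w\<^sub>t\<close>
  on payoffs ranging over an interval of length \<open>H\<close> (the \<open>Q\<close>-values stay in \<open>[0, H]\<close> by
  induction along the recursion). The potential argument for Hedge, with Hoeffding's lemma in
  each round and monotonicity of the log-sum-exp potential in the temperature, bounds that regret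
  by \<open>ln N w\<^sub>k / \<eta> + \<eta> H\<^sup>2 / 8 \<Sum>\<^sub>t w\<^sub>t\<^sup>2 / w (t - 1)\<close>. Multiplied by \<open>\<alpha>\<^sub>k\<^sup>1\<close> this becomes
  \<open>ln N \<alpha>\<^sub>k / \<eta> + \<eta> H\<^sup>2 / 8 \<Sum>\<^sub>t \<alpha>\<^sub>k\<^sup>t w\<^sub>t / w (t - 1)\<close>, and the last average is at most
  \<open>1 + 2 (H + 1) / k\<close> by induction on \<open>k\<close>. For small \<open>k\<close> the trivial bound \<open>H\<close> is better.
  Adding the bounds of the two players gives the second inequality.\<close>

lemma simplex_average_const: "p \<in> Defs.simplex \<Longrightarrow> (\<Sum>x\<in>UNIV. p x * c) = c"
  by (simp add: Defs.simplex_def flip: sum_distrib_right)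

lemma simplex_average_mono:
  "p \<in> Defs.simplex \<Longrightarrow> (\<And>x. f x \<le> g x) \<Longrightarrow> (\<Sum>x\<in>UNIV. p x * f x) \<le> (\<Sum>x\<in>UNIV. p x * g x)"
  by (intro sum_mono mult_left_mono) (auto simp: Defs.simplex_def)

lemma simplex_average_bounds:
  assumes "p \<in> Defs.simplex" and "\<And>x. lo \<le> g x \<and> g x \<le> hi"
  shows "lo \<le> (\<Sum>x\<in>UNIV. p x * g x) \<and> (\<Sum>x\<in>UNIV. p x * g x) \<le> hi"
  using simplex_average_mono[OF assms(1), of "\<lambda>_. lo" g] simplex_average_mono[OF assms(1), of g "\<lambda>_. hi"]
    assms by (simp add: simplex_average_const)

lemma uniform_in_simplex: "((\<lambda>_. 1 / real CARD('x)) :: 'x::finite \<Rightarrow> real) \<in> Defs.simplex"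
  by (simp add: Defs.simplex_def)

definition softmax :: "('x::finite \<Rightarrow> real) \<Rightarrow> 'x \<Rightarrow> real" where
  "softmax f x = exp (f x) / (\<Sum>y\<in>UNIV. exp (f y))"

lemma sum_exp_pos: "0 < (\<Sum>x\<in>(UNIV::'x::finite set). exp (f x :: real))"
  by (intro sum_pos) auto

lemma softmax_in_simplex: "softmax f \<in> Defs.simplex"
  using sum_exp_pos[of f] by (auto simp: Defs.simplex_def softmax_def simp flip: sum_divide_distrib)

lemma softmax_const: "softmax (\<lambda>_::'x::finite. c) = (\<lambda>_. 1 / real CARD('x))"
  by (simp add: softmax_def fun_eq_iff)

lemma exp_le_chord:
  fixes a b x l :: real
  assumes "a \<le> x" "x \<le> b" "a < b"
  shows "exp (l * x) \<le> (b - x) / (b - a) * exp (l * a) + (x - a) / (b - a) * exp (l * b)"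
proof -
  define y where "y = (x - a) / (b - a)"
  have y: "0 \<le> y" "y \<le> 1" using assms by (auto simp: y_def)
  have x: "x = a + y * (b - a)" using assms by (simp add: y_def)
  have "exp (l * x) = exp ((1 - y) * (l * a) + y * (l * b))" unfolding x by (simp add: algebra_simps)
  also have "\<dots> \<le> (1 - y) * exp (l * a) + y * exp (l * b)"
    using convex_onD[OF exp_convex, of y "l * a" "l * b"] y by simp
  also have "1 - y = (b - x) / (b - a)" using assms by (simp add: y_def field_simps)
  finally show ?thesis by (simp add: y_def)
qed

lemma hoeffding_lemma_simplex:
  fixes g :: "'x::finite \<Rightarrow> real"
  assumes p: "p \<in> Defs.simplex" and g: "\<And>x. a \<le> g x \<and> g x \<le> b" and "a < b" and "0 \<le> l"
  shows "ln (\<Sum>x\<in>UNIV. p x * exp (l * g x)) \<le> l * (\<Sum>x\<in>UNIV. p x * g x) + l\<^sup>2 * (b - a)\<^sup>2 / 8"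
proof -
  define m where "m = (\<Sum>x\<in>UNIV. p x * g x)"
  define q where "q = (m - a) / (b - a)"
  define h where "h = l * (b - a)"
  have m: "a \<le> m" using simplex_average_bounds[OF p g] by (simp add: m_def)
  have "0 \<le> q" using m \<open>a < b\<close> by (simp add: q_def)
  have "0 \<le> h" using \<open>a < b\<close> \<open>0 \<le> l\<close> by (simp add: h_def)
  have pos: "0 < (\<Sum>x\<in>UNIV. p x * exp (l * g x))"
  proof -
    have "exp (l * a) \<le> (\<Sum>x\<in>UNIV. p x * exp (l * g x))"
      using simplex_average_mono[OF p, of "\<lambda>_. exp (l * a)"] g \<open>0 \<le> l\<close>
      by (simp add: simplex_average_const[OF p] mult_left_mono)
    thus ?thesis using exp_gt_zero[of "l * a"] by linarith
  qed
  define C where "C x = (b - x) / (b - a) * exp (l * a) + (x - a) / (b - a) * exp (l * b)" for x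
  define c where "c = (exp (l * b) - exp (l * a)) / (b - a)"
  have C_affine: "C x = C 0 + x * c" for x
    using \<open>a < b\<close> unfolding C_def c_def by (simp add: divide_simps) (simp add: algebra_simps)
  have "(\<Sum>x\<in>UNIV. p x * exp (l * g x)) \<le> (\<Sum>x\<in>UNIV. p x * C (g x))"
    unfolding C_def using exp_le_chord g \<open>a < b\<close> by (intro simplex_average_mono[OF p]) auto
  also have "\<dots> = C m"
    using p by (subst (1 2) C_affine)
      (simp add: m_def ring_distribs sum.distrib simplex_average_const sum_distrib_right mult.assoc)
  also have "\<dots> = (b - m) / (b - a) * exp (l * a) + (m - a) / (b - a) * exp (l * b)"
    by (simp add: C_def)
  also have "\<dots> = exp (l * a) * (1 + q * (exp h - 1))"
  proof -
    have "(b - m) / (b - a) = 1 - q" "(m - a) / (b - a) = q"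
      using \<open>a < b\<close> by (simp_all add: q_def field_simps)
    moreover have "exp (l * b) = exp (l * a) * exp h" by (simp add: h_def algebra_simps flip: exp_add)
    ultimately show ?thesis by (simp only:) (simp add: algebra_simps)
  qed
  also have "\<dots> = exp (l * m) * exp (- h * q + ln (1 + q * (exp h - 1)))"
  proof -
    have "h * q = l * (m - a)" using \<open>a < b\<close> by (simp add: h_def q_def)
    hence "exp (l * m) * exp (- h * q) = exp (l * a)" by (simp add: algebra_simps flip: exp_add)
    moreover have "1 + q * (exp h - 1) > 0" using \<open>0 \<le> q\<close> \<open>0 \<le> h\<close> by (simp add: add_pos_nonneg)
    ultimately show ?thesis unfolding exp_add by (simp add: mult.assoc[symmetric])
  qed
  finally have "ln (\<Sum>x\<in>UNIV. p x * exp (l * g x)) \<le> l * m + (- h * q + ln (1 + q * (exp h - 1)))"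
    using pos by (simp add: ln_le_cancel_iff[symmetric] ln_mult)
  also have "\<dots> \<le> l * m + h\<^sup>2 / 8"
    using Hoeffdings_lemma_aux[OF \<open>0 \<le> h\<close> \<open>0 \<le> q\<close>] by simp
  finally show ?thesis by (simp add: m_def h_def power_mult_distrib)
qed

section \<open>Hedge with increasing weights\<close>

lemma ln_sum_exp_shift_le:
  fixes G g :: "'x::finite \<Rightarrow> real"
  assumes "0 \<le> l" "0 < R" "\<And>x. lo \<le> g x \<and> g x \<le> lo + R"
  shows "ln (\<Sum>x\<in>UNIV. exp (G x + l * g x))
           \<le> ln (\<Sum>x\<in>UNIV. exp (G x)) + l * (\<Sum>x\<in>UNIV. softmax G x * g x) + l\<^sup>2 * R\<^sup>2 / 8"
proof -
  define Z where "Z = (\<Sum>x\<in>UNIV. exp (G x))"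
  have "Z > 0" unfolding Z_def by (rule sum_exp_pos)
  have split: "(\<Sum>x\<in>UNIV. exp (G x + l * g x)) = Z * (\<Sum>x\<in>UNIV. softmax G x * exp (l * g x))"
    using \<open>Z > 0\<close> by (simp add: softmax_def Z_def[symmetric] exp_add sum_distrib_left)
  hence "(\<Sum>x\<in>UNIV. softmax G x * exp (l * g x)) > 0"
    using \<open>Z > 0\<close> sum_exp_pos[of "\<lambda>x. G x + l * g x"] by (simp add: zero_less_mult_iff)
  hence "ln (\<Sum>x\<in>UNIV. exp (G x + l * g x)) = ln Z + ln (\<Sum>x\<in>UNIV. softmax G x * exp (l * g x))"
    using \<open>Z > 0\<close> by (simp add: split ln_mult)
  also have "\<dots> \<le> ln Z + (l * (\<Sum>x\<in>UNIV. softmax G x * g x) + l\<^sup>2 * ((lo + R) - lo)\<^sup>2 / 8)"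
    using hoeffding_lemma_simplex[OF softmax_in_simplex, where g = g and a = lo and b = "lo + R"] assms by simp
  finally show ?thesis by (simp add: Z_def)
qed

text \<open>Monotonicity of power means: \<open>\<lambda> \<mapsto> ln (mean of exp (\<lambda> G)) / \<lambda>\<close> increases with \<open>\<lambda>\<close>.\<close>
lemma ln_sum_exp_div_mono:
  fixes G :: "'x::finite \<Rightarrow> real"
  assumes "0 < l'" and "l' \<le> l"
  shows "ln (\<Sum>x\<in>UNIV. exp (l' * G x)) / l'
           \<le> ln (\<Sum>x\<in>UNIV. exp (l * G x)) / l + (1 / l' - 1 / l) * ln (real CARD('x))"
proof -
  define r where "r = l' / l"
  have "0 < l" using assms by simp
  have r: "0 < r" "r \<le> 1" using assms by (auto simp: r_def)
  define Y where "Y = (\<Sum>x\<in>UNIV. exp (l * G x))"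
  define N where "N = real CARD('x)"
  have "N > 0" by (simp add: N_def)
  have "Y > 0" unfolding Y_def by (rule sum_exp_pos)
  define c where "c = ln (Y / N)"
  have tangent: "exp (l' * G x) * exp (- (r * c)) \<le> r * (exp (l * G x) / exp c) + (1 - r)" for x
  proof -
    have "exp (l' * G x) * exp (- (r * c)) = exp ((1 - r) * 0 + r * (l * G x - c))"
      using \<open>0 < l\<close> by (simp add: r_def algebra_simps flip: exp_add)
    also have "\<dots> \<le> (1 - r) * exp 0 + r * exp (l * G x - c)"
      using convex_onD[OF exp_convex, of r 0 "l * G x - c"] r by simp
    finally show ?thesis by (simp add: exp_diff)
  qed
  have "(\<Sum>x\<in>UNIV. exp (l' * G x)) * exp (- (r * c)) \<le> (\<Sum>x\<in>UNIV. r * (exp (l * G x) / exp c) + (1 - r))"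
    unfolding sum_distrib_right by (intro sum_mono tangent)
  also have "\<dots> = r * (Y / exp c) + (1 - r) * N"
    by (simp add: sum.distrib Y_def N_def flip: sum_distrib_left sum_divide_distrib)
  also have "\<dots> = N" using \<open>Y > 0\<close> \<open>N > 0\<close> by (simp add: c_def algebra_simps)
  finally have "(\<Sum>x\<in>UNIV. exp (l' * G x)) \<le> N * exp (r * c)"
    by (simp add: exp_minus field_simps)
  hence "ln (\<Sum>x\<in>UNIV. exp (l' * G x)) \<le> ln (N * exp (r * c))"
    using sum_exp_pos[of "\<lambda>x. l' * G x"] \<open>N > 0\<close> by (subst ln_le_cancel_iff) auto
  also have "\<dots> = ln N + r * (ln Y - ln N)"
    using \<open>N > 0\<close> \<open>Y > 0\<close> by (simp add: ln_mult c_def ln_div)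
  finally have "ln (\<Sum>x\<in>UNIV. exp (l' * G x)) \<le> ln N + r * (ln Y - ln N)" .
  hence "ln (\<Sum>x\<in>UNIV. exp (l' * G x)) / l' \<le> (ln N + r * (ln Y - ln N)) / l'"
    using assms by (simp add: divide_right_mono)
  also have "\<dots> = ln Y / l + (1 / l' - 1 / l) * ln N"
    using \<open>0 < l\<close> assms by (simp add: r_def field_simps)
  finally show ?thesis by (simp add: Y_def N_def)
qed

definition hedge_policy :: "real \<Rightarrow> (nat \<Rightarrow> real) \<Rightarrow> (nat \<Rightarrow> 'x::finite \<Rightarrow> real) \<Rightarrow> nat \<Rightarrow> 'x \<Rightarrow> real" where
  "hedge_policy eta w g t = softmax (\<lambda>x. eta / w (t - 1) * (\<Sum>j=1..t-1. w j * g j x))"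

definition weighted_regret ::
    "(nat \<Rightarrow> real) \<Rightarrow> nat \<Rightarrow> (nat \<Rightarrow> 'x::finite \<Rightarrow> real) \<Rightarrow> (nat \<Rightarrow> 'x \<Rightarrow> real) \<Rightarrow> ('x \<Rightarrow> real) \<Rightarrow> real" where
  "weighted_regret w k g p z =
     (\<Sum>t=1..k. w t * ((\<Sum>x\<in>UNIV. z x * g t x) - (\<Sum>x\<in>UNIV. p t x * g t x)))"

lemma weighted_regret_le_pure:
  assumes z: "z \<in> Defs.simplex"
    and pure: "\<And>x0. (\<Sum>t=1..k. w t * g t x0) - (\<Sum>t=1..k. w t * (\<Sum>x\<in>UNIV. p t x * g t x)) \<le> B"
  shows "weighted_regret w k g p z \<le> B"
proof -
  define C where "C = (\<Sum>t=1..k. w t * (\<Sum>x\<in>UNIV. p t x * g t x))"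
  have "(\<Sum>t=1..k. w t * (\<Sum>x\<in>UNIV. z x * g t x)) = (\<Sum>x\<in>UNIV. z x * (\<Sum>t=1..k. w t * g t x))"
    unfolding sum_distrib_left by (subst sum.swap) (simp add: mult.left_commute)
  hence "weighted_regret w k g p z = (\<Sum>x\<in>UNIV. z x * ((\<Sum>t=1..k. w t * g t x) - C))"
    by (simp add: weighted_regret_def C_def right_diff_distrib sum_subtractf simplex_average_const[OF z])
  also have "\<dots> \<le> (\<Sum>x\<in>UNIV. z x * B)"
    using pure by (intro simplex_average_mono[OF z]) (simp add: C_def)
  finally show ?thesis by (simp add: simplex_average_const[OF z])
qed

lemma hedge_weighted_regret_le:
  fixes g :: "nat \<Rightarrow> 'x::finite \<Rightarrow> real" and w lo :: "nat \<Rightarrow> real"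
  assumes w_pos: "\<And>t. 0 < w t" and w_mono: "\<And>t. w t \<le> w (Suc t)" and "0 < eta" "0 < R"
    and g: "\<And>t x. 1 \<le> t \<Longrightarrow> lo t \<le> g t x \<and> g t x \<le> lo t + R"
    and z: "z \<in> Defs.simplex"
  shows "weighted_regret w k g (hedge_policy eta w g) z
           \<le> ln (real CARD('x)) * w k / eta + eta * R\<^sup>2 / 8 * (\<Sum>t=1..k. (w t)\<^sup>2 / w (t - 1))"
proof (rule weighted_regret_le_pure[OF z])
  define G where "G k x = (\<Sum>j=1..k. w j * g j x)" for k x
  define N where "N = real CARD('x)"
  define p where "p = hedge_policy eta w g"
  define Phi where "Phi k = w k / eta * ln (\<Sum>x\<in>UNIV. exp (eta / w k * G k x))" for k
  define B where "B k = ln N * w k / eta + (\<Sum>t=1..k. w t * (\<Sum>x\<in>UNIV. p t x * g t x))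
                          + eta * R\<^sup>2 / 8 * (\<Sum>t=1..k. (w t)\<^sup>2 / w (t - 1))" for k
  have Phi_le_B: "Phi k \<le> B k" for k
  proof (induction k)
    case 0
    show ?case by (simp add: Phi_def B_def G_def N_def mult.commute)
  next
    case (Suc k)
    define lam where "lam = eta / w k"
    define l where "l = lam * w (Suc k)"
    have "0 < lam" "0 \<le> l" using \<open>0 < eta\<close> w_pos[of k] w_pos[of "Suc k"] by (simp_all add: lam_def l_def)
    have p: "p (Suc k) = softmax (\<lambda>x. lam * G k x)" by (simp add: p_def hedge_policy_def lam_def G_def)
    define E where "E = (\<Sum>x\<in>UNIV. p (Suc k) x * g (Suc k) x)"
    have cooled: "Phi (Suc k) \<le> w k / eta * ln (\<Sum>x\<in>UNIV. exp (lam * G (Suc k) x)) + (w (Suc k) / eta - w k / eta) * ln N"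
      using ln_sum_exp_div_mono[of "eta / w (Suc k)" lam "G (Suc k)"] w_pos w_mono[of k] \<open>0 < eta\<close>
      by (simp add: Phi_def lam_def N_def frac_le mult.commute)
    have "ln (\<Sum>x\<in>UNIV. exp (lam * G (Suc k) x)) \<le> ln (\<Sum>x\<in>UNIV. exp (lam * G k x)) + l * E + l\<^sup>2 * R\<^sup>2 / 8"
      using ln_sum_exp_shift_le[OF \<open>0 \<le> l\<close> \<open>0 < R\<close> g[of "Suc k"], of "\<lambda>x. lam * G k x"]
      by (simp add: p E_def G_def l_def algebra_simps)
    hence "w k / eta * ln (\<Sum>x\<in>UNIV. exp (lam * G (Suc k) x))
           \<le> w k / eta * (ln (\<Sum>x\<in>UNIV. exp (lam * G k x)) + l * E + l\<^sup>2 * R\<^sup>2 / 8)"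
      using \<open>0 < eta\<close> w_pos[of k] by (intro mult_left_mono) auto
    also have "\<dots> = Phi k + w (Suc k) * E + eta * R\<^sup>2 / 8 * ((w (Suc k))\<^sup>2 / w k)"
      using \<open>0 < eta\<close> w_pos[of k] by (simp add: Phi_def lam_def l_def field_simps power2_eq_square)
    finally have "Phi (Suc k) \<le> Phi k + w (Suc k) * E + eta * R\<^sup>2 / 8 * ((w (Suc k))\<^sup>2 / w k)
                    + (w (Suc k) / eta - w k / eta) * ln N"
      using cooled by linarith
    thus ?case using Suc.IH by (simp add: B_def E_def algebra_simps)
  qed
  fix x0
  have "eta / w k * G k x0 \<le> ln (\<Sum>x\<in>UNIV. exp (eta / w k * G k x))"
    using member_le_sum[of x0 UNIV "\<lambda>x. exp (eta / w k * G k x)"]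
    by (subst ln_ge_iff) (simp_all add: sum_exp_pos)
  hence "G k x0 \<le> Phi k"
    using \<open>0 < eta\<close> w_pos[of k] by (simp add: Phi_def field_simps)
  with Phi_le_B[of k] show "(\<Sum>t=1..k. w t * g t x0) - (\<Sum>t=1..k. w t * (\<Sum>x\<in>UNIV. p t x * g t x))
      \<le> ln N * w k / eta + eta * R\<^sup>2 / 8 * (\<Sum>t=1..k. (w t)\<^sup>2 / w (t - 1))"
    by (simp add: B_def G_def)
qed

lemma hedge_policy_in_simplex: "hedge_policy eta w g t \<in> Defs.simplex"
  by (simp add: hedge_policy_def softmax_in_simplex)

lemma eq_hedge_policy_if_uniform_start:
  assumes "\<And>x. p 1 x = 1 / real CARD('x::finite)"
    and "\<And>t x. 2 \<le> t \<Longrightarrow> p t x = hedge_policy eta w g t x" and "1 \<le> t"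
  shows "p t = (hedge_policy eta w g t :: 'x \<Rightarrow> real)"
proof (cases "t = 1")
  case True
  thus ?thesis using assms(1) by (simp add: fun_eq_iff hedge_policy_def softmax_const)
qed (use assms(2,3) in \<open>simp add: fun_eq_iff\<close>)

lemma hedge_policy_cong:
  assumes "\<And>t. 1 \<le> t \<Longrightarrow> w' t = w t" and "1 \<le> t"
  shows "hedge_policy eta w' g t = hedge_policy eta w g t"
proof (cases "t = 1")
  case False
  hence "w' (t - 1) = w (t - 1)" and "\<And>j. j \<in> {1..t-1} \<Longrightarrow> w' j = w j"
    using assms by auto
  thus ?thesis by (simp add: hedge_policy_def)
qed (simp add: hedge_policy_def)

lemma weighted_regret_le_range:
  assumes w: "\<And>t. t \<in> {1..k} \<Longrightarrow> 0 \<le> w t" "(\<Sum>t=1..k. w t) = 1"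
    and p: "\<And>t. t \<in> {1..k} \<Longrightarrow> p t \<in> Defs.simplex" and z: "z \<in> Defs.simplex"
    and g: "\<And>t x. t \<in> {1..k} \<Longrightarrow> lo t \<le> g t x \<and> g t x \<le> lo t + R"
  shows "weighted_regret w k g p z \<le> R"
proof -
  have "weighted_regret w k g p z \<le> (\<Sum>t=1..k. w t * R)"
    unfolding weighted_regret_def
  proof (intro sum_mono mult_left_mono)
    fix t assume t: "t \<in> {1..k}"
    have "(\<Sum>x\<in>UNIV. z x * g t x) \<le> lo t + R" "lo t \<le> (\<Sum>x\<in>UNIV. p t x * g t x)"
      using simplex_average_bounds[OF z g[OF t]] simplex_average_bounds[OF p[OF t] g[OF t]] by auto
    thus "(\<Sum>x\<in>UNIV. z x * g t x) - (\<Sum>x\<in>UNIV. p t x * g t x) \<le> R" by linarith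
  qed (use w in auto)
  also have "\<dots> = R" using w by (simp flip: sum_distrib_right)
  finally show ?thesis .
qed

lemma simplex_card_1:
  assumes "CARD('x::finite) = 1" and "p \<in> Defs.simplex"
  shows "p = (\<lambda>_::'x. 1)"
proof
  fix x
  obtain x0 :: 'x where x0: "UNIV = {x0}" using assms(1) card_1_singletonE by blast
  have "sum p UNIV = 1" using assms(2) by (simp add: Defs.simplex_def)
  moreover have "x = x0" using x0 by blast
  ultimately show "p x = 1" by (simp add: x0)
qed

lemma weighted_regret_card_1:
  assumes "CARD('x::finite) = 1" "\<And>t. t \<in> {1..k} \<Longrightarrow> p t \<in> Defs.simplex" "z \<in> Defs.simplex"
  shows "weighted_regret w k g p (z :: 'x \<Rightarrow> real) = 0"
proof -
  have "p t = z" if "t \<in> {1..k}" for t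
    using simplex_card_1[OF assms(1) assms(2)[OF that]] simplex_card_1[OF assms(1) assms(3)] by simp
  thus ?thesis unfolding weighted_regret_def by (intro sum.neutral) auto
qed

lemma weighted_regret_cong:
  "(\<And>t. t \<in> {1..k} \<Longrightarrow> p t = p' t) \<Longrightarrow> weighted_regret w k g p z = weighted_regret w k g p' z"
  unfolding weighted_regret_def by (intro sum.cong) auto

section \<open>The learning-rate weights\<close>

lemma lrw_same: "lrw H k k = lr H k"
  by (simp add: lrw_def)

lemma lrw_Suc: "t \<le> k \<Longrightarrow> lrw H (Suc k) t = (1 - lr H (Suc k)) * lrw H k t"
  by (simp add: lrw_def prod.cl_ivl_Suc)

lemma lr_Suc_0 [simp]: "lr H (Suc 0) = 1"
  by (simp add: lr_def)

lemma lr_bounds: "1 \<le> k \<Longrightarrow> 0 < lr H k \<and> lr H k \<le> 1"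
  by (simp add: lr_def)

lemma one_minus_lr: "1 \<le> k \<Longrightarrow> 1 - lr H k = (real k - 1) / (real H + real k)"
  by (simp add: lr_def field_simps)

lemma wgt_1 [simp]: "wgt H (Suc 0) = 1"
  by (simp add: wgt_def lrw_def)

lemma mixing_step_le:
  fixes x k :: real
  assumes "1 \<le> x" "1 \<le> k"
  shows "k / (x + k) * (1 + 2 * x / k) + x / (x + k) * ((x + k - 1) / k) \<le> 1 + 2 * x / (k + 1)"
proof -
  have "k / (x + k) * (1 + 2 * x / k) + x / (x + k) * ((x + k - 1) / k)
        = ((k + 2 * x) * k + x * (x + k - 1)) / ((x + k) * k)"
    using assms by (simp add: divide_simps)
  also have "\<dots> \<le> (k + 1 + 2 * x) / (k + 1)"
  proof -
    have "(k + 1 + 2 * x) * ((x + k) * k) - ((k + 2 * x) * k + x * (x + k - 1)) * (k + 1)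
          = x * (x - 1) * (k - 1)"
      by (simp add: algebra_simps)
    moreover have "0 \<le> x * (x - 1) * (k - 1)" using assms by simp
    ultimately have "((k + 2 * x) * k + x * (x + k - 1)) * (k + 1) \<le> (k + 1 + 2 * x) * ((x + k) * k)"
      by linarith
    thus ?thesis using assms
      by (simp add: pos_divide_le_eq pos_le_divide_eq mult.commute mult.left_commute)
  qed
  also have "\<dots> = 1 + 2 * x / (k + 1)"
    using assms by (simp add: field_simps)
  finally show ?thesis .
qed

text \<open>\<open>wgt H 0 = (H + 1) / H\<close> exceeds \<open>wgt H 1 = 1\<close>; resetting it to \<open>1\<close> makes the
  weights monotone without changing any Hedge policy.\<close>
definition wgt_ext :: "nat \<Rightarrow> nat \<Rightarrow> real" where
  "wgt_ext H t = (if t = 0 then 1 else wgt H t)"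

context
  fixes H :: nat
  assumes H: "1 \<le> H"
begin

lemma lrw_first_pos: "0 < lrw H t 1"
proof -
  have "lrw H t 1 = (\<Prod>j\<in>{2..t}. 1 - lr H j)"
    by (simp add: lrw_def numeral_2_eq_2)
  also have "\<dots> > 0"
    using one_minus_lr H by (intro prod_pos) auto
  finally show ?thesis .
qed

lemma wgt_pos: "0 < wgt H t"
  using lrw_first_pos H by (simp add: wgt_def lr_def)

lemma wgt_Suc:
  assumes "1 \<le> t" shows "wgt H (Suc t) = wgt H t * ((real H + real t) / real t)"
proof -
  define a where "a = lrw H t 1"
  have "0 < a" "0 < real t" using lrw_first_pos[of t] assms by (simp_all add: a_def)
  have "lrw H (Suc t) 1 = (1 - lr H (Suc t)) * a"
    using lrw_Suc[of 1 t H] assms by (simp add: a_def)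
  also have "1 - lr H (Suc t) = real t / (real H + real t + 1)"
    using one_minus_lr[of "Suc t" H] by simp
  finally have lrw_Suc_1: "lrw H (Suc t) 1 = real t / (real H + real t + 1) * a" .
  have w_Suc: "wgt H (Suc t) = (real H + 1) / (a * real t)"
    using \<open>0 < a\<close> \<open>0 < real t\<close> unfolding wgt_def lrw_Suc_1 by (simp add: lr_def divide_simps)
  have w: "wgt H t = (real H + 1) / (a * (real H + real t))"
    using \<open>0 < a\<close> \<open>0 < real t\<close> by (simp add: wgt_def a_def lr_def divide_simps)
  show ?thesis unfolding w_Suc w using \<open>0 < a\<close> \<open>0 < real t\<close> by (simp add: divide_simps)
qed

lemma wgt_ext_pos: "0 < wgt_ext H t"
  by (simp add: wgt_ext_def wgt_pos)

lemma wgt_ext_mono: "wgt_ext H t \<le> wgt_ext H (Suc t)"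
proof (cases "t = 0")
  case False
  hence "wgt H t * 1 \<le> wgt H t * ((real H + real t) / real t)"
    using wgt_pos[of t] by (intro mult_left_mono) auto
  thus ?thesis using wgt_Suc[of t] False by (simp add: wgt_ext_def)
qed (simp add: wgt_ext_def)

lemma lrw_eq_wgt:
  assumes "1 \<le> t" "t \<le> k" shows "lrw H k t = lrw H k 1 * wgt H t"
  using assms(2)
proof (induction k rule: dec_induct)
  case base
  show ?case using lrw_first_pos[of t] by (simp add: wgt_def lrw_same)
next
  case (step k)
  thus ?case using lrw_Suc[of t k] lrw_Suc[of 1 k] assms(1) by simp
qed

lemma lrw_nonneg: "1 \<le> t \<Longrightarrow> t \<le> k \<Longrightarrow> 0 \<le> lrw H k t"
  using lrw_eq_wgt[of t k] lrw_first_pos[of k] wgt_pos[of t] by simp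

lemma sum_lrw: "1 \<le> k \<Longrightarrow> (\<Sum>t=1..k. lrw H k t) = 1"
proof (induction k rule: dec_induct)
  case (step k)
  have "(\<Sum>t=1..Suc k. lrw H (Suc k) t) = (1 - lr H (Suc k)) * (\<Sum>t=1..k. lrw H k t) + lr H (Suc k)"
    by (simp add: lrw_same sum_distrib_left lrw_Suc)
  thus ?case using step by simp
qed (simp add: lrw_same)

lemma sum_lrw_wgt_ratio_le:
  "1 \<le> k \<Longrightarrow> (\<Sum>t=1..k. lrw H k t * (wgt_ext H t / wgt_ext H (t - 1))) \<le> 1 + 2 * (real H + 1) / real k"
proof (induction k rule: dec_induct)
  case base
  show ?case using H by (simp add: lrw_same wgt_ext_def)
next
  case (step k)
  define x where "x = real H + 1"
  have "1 \<le> x" "1 \<le> real k" using step.hyps by (simp_all add: x_def)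
  have ratio: "wgt_ext H (Suc k) / wgt_ext H k = (x + real k - 1) / real k"
    using wgt_Suc[of k] wgt_pos[of k] step.hyps by (simp add: wgt_ext_def x_def)
  define S where "S k = (\<Sum>t=1..k. lrw H k t * (wgt_ext H t / wgt_ext H (t - 1)))" for k
  have "S (Suc k) = (1 - lr H (Suc k)) * S k + lr H (Suc k) * (wgt_ext H (Suc k) / wgt_ext H k)"
    by (simp add: S_def lrw_same sum_distrib_left lrw_Suc mult.assoc)
  also have "\<dots> = real k / (x + real k) * S k + x / (x + real k) * ((x + real k - 1) / real k)"
  proof -
    have "1 - lr H (Suc k) = real k / (x + real k)" "lr H (Suc k) = x / (x + real k)"
      using one_minus_lr[of "Suc k" H] by (simp_all add: x_def lr_def)
    thus ?thesis by (simp only: ratio)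
  qed
  also have "\<dots> \<le> real k / (x + real k) * (1 + 2 * x / real k) + x / (x + real k) * ((x + real k - 1) / real k)"
    using step.IH \<open>1 \<le> x\<close> by (intro add_right_mono mult_left_mono) (simp_all add: S_def x_def)
  also have "\<dots> \<le> 1 + 2 * x / (real k + 1)"
    using \<open>1 \<le> x\<close> \<open>1 \<le> real k\<close> by (rule mixing_step_le)
  finally show ?case by (simp add: S_def x_def add.commute)
qed

end

lemma lrw_hedge_regret_le:
  fixes g :: "nat \<Rightarrow> 'x::finite \<Rightarrow> real" and lo :: "nat \<Rightarrow> real"
  assumes H: "1 \<le> H" and "0 < eta" and k: "1 \<le> k"
    and g: "\<And>t x. 1 \<le> t \<Longrightarrow> lo t \<le> g t x \<and> g t x \<le> lo t + real H"
    and z: "z \<in> Defs.simplex"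
  shows "weighted_regret (lrw H k) k g (hedge_policy eta (wgt H) g) z
           \<le> ln (real CARD('x)) * lr H k / eta + eta * (real H)\<^sup>2 / 8 * (1 + 2 * (real H + 1) / real k)"
proof -
  define c where "c = lrw H k 1"
  define w where "w = wgt_ext H"
  define N where "N = ln (real CARD('x))"
  have "0 < c" using lrw_first_pos[OF H, of k] by (simp add: c_def)
  have lrw: "lrw H k t = c * w t" if "t \<in> {1..k}" for t
    using that lrw_eq_wgt[OF H, of t k] by (simp add: c_def w_def wgt_ext_def)
  have policy: "hedge_policy eta (wgt H) g t = hedge_policy eta w g t" if "1 \<le> t" for t
    using hedge_policy_cong[of "wgt H" w, OF _ that] by (simp add: w_def wgt_ext_def)
  have "weighted_regret (lrw H k) k g (hedge_policy eta (wgt H) g) z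
        = c * weighted_regret w k g (hedge_policy eta w g) z"
    unfolding weighted_regret_def sum_distrib_left by (intro sum.cong) (auto simp: lrw policy)
  also have "\<dots> \<le> c * (N * w k / eta + eta * (real H)\<^sup>2 / 8 * (\<Sum>t=1..k. (w t)\<^sup>2 / w (t - 1)))"
    using hedge_weighted_regret_le[where w = w and R = "real H", OF _ _ \<open>0 < eta\<close> _ g z]
      wgt_ext_pos[OF H] wgt_ext_mono[OF H] H \<open>0 < c\<close>
    by (simp add: w_def N_def)
  also have "\<dots> = N * lr H k / eta + eta * (real H)\<^sup>2 / 8 * (\<Sum>t=1..k. lrw H k t * (w t / w (t - 1)))"
  proof -
    have "c * w k = lr H k" using lrw[of k] k by (simp add: lrw_same)
    moreover have "c * (\<Sum>t=1..k. (w t)\<^sup>2 / w (t - 1)) = (\<Sum>t=1..k. lrw H k t * (w t / w (t - 1)))"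
      unfolding sum_distrib_left by (intro sum.cong) (simp_all add: lrw power2_eq_square)
    ultimately show ?thesis by (simp add: algebra_simps)
  qed
  also have "\<dots> \<le> N * lr H k / eta + eta * (real H)\<^sup>2 / 8 * (1 + 2 * (real H + 1) / real k)"
    using sum_lrw_wgt_ratio_le[OF H k] \<open>0 < eta\<close> by (intro add_left_mono mult_left_mono) (auto simp: w_def)
  finally show ?thesis by (simp add: N_def)
qed

lemma le_div_add_mult_sq:
  fixes a e h :: real
  assumes "0 < e" and "1 / 2 \<le> a"
  shows "h \<le> a / e + e * h\<^sup>2 / 2"
proof -
  have "2 * e * h \<le> 1 + (e * h)\<^sup>2" using sum_squares_bound[of 1 "e * h"] by (simp add: algebra_simps)
  hence "h \<le> 1 / (2 * e) + e * h\<^sup>2 / 2" using assms by (simp add: field_simps power2_eq_square)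
  moreover have "1 / (2 * e) \<le> a / e" using assms by (simp add: field_simps)
  ultimately show ?thesis by linarith
qed

lemma le_bound_if_small_k:
  fixes eta L :: real
  assumes "0 < eta" "1 \<le> k" "3 * real k < 2 * (real H + 1)" "2 / 3 \<le> L"
  shows "real H \<le> (real H + 1) * L / (eta * real k) + eta * (real H)\<^sup>2 / 2"
proof -
  have "3 / 2 \<le> (real H + 1) / real k" using assms(2,3) by (simp add: field_simps)
  hence "(3 / 2) * (2 / 3) \<le> (real H + 1) / real k * L" using assms(4) by (intro mult_mono) auto
  hence "1 / 2 \<le> (real H + 1) * L / real k" using assms(2) by (simp add: divide_simps split: if_splits)
  hence "real H \<le> (real H + 1) * L / real k / eta + eta * (real H)\<^sup>2 / 2"
    by (rule le_div_add_mult_sq[OF assms(1)])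
  thus ?thesis by (simp add: mult.commute)
qed

text \<open>For \<open>k \<ge> 2 (H + 1) / 3\<close> this is the Hedge bound; for smaller \<open>k\<close> the trivial
  bound \<open>H\<close> on the regret suffices.\<close>
lemma lrw_hedge_regret_bound:
  fixes g :: "nat \<Rightarrow> 'x::finite \<Rightarrow> real" and lo :: "nat \<Rightarrow> real"
  assumes H: "1 \<le> H" and "0 < eta" and k: "1 \<le> k"
    and g: "\<And>t x. 1 \<le> t \<Longrightarrow> lo t \<le> g t x \<and> g t x \<le> lo t + real H"
    and z: "z \<in> Defs.simplex" and L: "ln (real CARD('x)) \<le> L"
  shows "weighted_regret (lrw H k) k g (hedge_policy eta (wgt H) g) z
           \<le> (real H + 1) * L / (eta * real k) + eta * (real H)\<^sup>2 / 2"
proof -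
  have "0 < CARD('x)" by (simp add: card_gt_0_iff)
  hence "0 \<le> L" using L ln_ge_zero[of "real CARD('x)"] by linarith
  have "0 < real k" using k by simp
  show ?thesis
  proof (cases "2 * (real H + 1) \<le> 3 * real k")
    case True
    have "ln (real CARD('x)) * lr H k \<le> L * ((real H + 1) / real k)"
      using L \<open>0 \<le> L\<close> k by (intro mult_mono) (simp_all add: lr_def frac_le)
    hence "ln (real CARD('x)) * lr H k / eta \<le> L * ((real H + 1) / real k) / eta"
      using \<open>0 < eta\<close> by (intro divide_right_mono) auto
    moreover have "1 + 2 * (real H + 1) / real k \<le> 4"
      using True \<open>0 < real k\<close> by (simp add: field_simps)
    hence "eta * (real H)\<^sup>2 / 8 * (1 + 2 * (real H + 1) / real k) \<le> eta * (real H)\<^sup>2 / 8 * 4"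
      using \<open>0 < eta\<close> by (intro mult_left_mono) auto
    moreover have "L * ((real H + 1) / real k) / eta = (real H + 1) * L / (eta * real k)"
      by (simp add: mult_ac)
    ultimately show ?thesis
      using lrw_hedge_regret_le[where g = g and lo = lo, OF H \<open>0 < eta\<close> k g z] by linarith
  next
    case False
    have regret_le_H: "weighted_regret (lrw H k) k g (hedge_policy eta (wgt H) g) z \<le> real H"
      using lrw_nonneg[OF H] sum_lrw[OF H k] g
      by (intro weighted_regret_le_range[where lo = lo, OF _ _ hedge_policy_in_simplex z]) auto
    show ?thesis
    proof (cases "CARD('x) = 1")
      case True
      thus ?thesis using weighted_regret_card_1[OF True hedge_policy_in_simplex z] \<open>0 \<le> L\<close> \<open>0 < eta\<close> k
        by simp
    next
      case False
      hence "2 \<le> CARD('x)" using \<open>0 < CARD('x)\<close> by linarith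
      hence "ln 2 \<le> ln (real CARD('x))" by simp
      hence "2 / 3 \<le> L" using L ln2_ge_two_thirds by linarith
      hence "real H \<le> (real H + 1) * L / (eta * real k) + eta * (real H)\<^sup>2 / 2"
        using le_bound_if_small_k[OF \<open>0 < eta\<close> k] \<open>\<not> 2 * (real H + 1) \<le> 3 * real k\<close> by simp
      thus ?thesis using regret_le_H by linarith
    qed
  qed
qed

section \<open>The Markov game\<close>

lemma pay_eq_sum_rows: "pay Q x y = (\<Sum>a\<in>UNIV. x a * (\<Sum>b\<in>UNIV. y b * Q a b))"
  unfolding pay_def by (simp add: sum_distrib_left mult_ac)

lemma pay_eq_sum_cols: "pay Q x y = (\<Sum>b\<in>UNIV. y b * (\<Sum>a\<in>UNIV. x a * Q a b))"
  unfolding pay_def by (subst sum.swap) (simp add: sum_distrib_left mult_ac)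

lemma pay_bounds:
  assumes "x \<in> Defs.simplex" "y \<in> Defs.simplex" and "\<And>a b. lo \<le> Q a b \<and> Q a b \<le> hi"
  shows "lo \<le> pay Q x y \<and> pay Q x y \<le> hi"
  unfolding pay_eq_sum_rows
  using assms by (intro simplex_average_bounds simplex_average_bounds[where g = "\<lambda>b. Q _ b"]) auto

lemma convex_comb_bounds:
  fixes t x y lo hi :: real
  assumes "0 \<le> t" "t \<le> 1" "lo \<le> x \<and> x \<le> hi" "lo \<le> y \<and> y \<le> hi"
  shows "lo \<le> (1 - t) * x + t * y \<and> (1 - t) * x + t * y \<le> hi"
proof -
  have "(1 - t) * lo + t * lo \<le> (1 - t) * x + t * y" "(1 - t) * x + t * y \<le> (1 - t) * hi + t * hi"
    using assms by (intro add_mono mult_left_mono; simp)+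
  thus ?thesis by (simp add: algebra_simps)
qed

lemma Q_bounds:
  fixes Q :: "nat \<Rightarrow> nat \<Rightarrow> 's::finite \<Rightarrow> 'a::finite \<Rightarrow> 'b::finite \<Rightarrow> real"
  assumes r_range: "\<And>h s a b. h \<in> {1..H} \<Longrightarrow> 0 \<le> r h s a b \<and> r h s a b \<le> 1"
    and P_nonneg: "\<And>h s a b s'. h \<in> {1..H} \<Longrightarrow> 0 \<le> P h s a b s'"
    and P_sum: "\<And>h s a b. h \<in> {1..H} \<Longrightarrow> (\<Sum>s'\<in>UNIV. P h s a b s') = 1"
    and Q_last: "\<And>k s a b. Q k (H+1) s a b = 0"
    and Q_init: "\<And>h s a b. h \<in> {1..H} \<Longrightarrow> Q 0 h s a b = real H - real h + 1"
    and Q_step: "\<And>k h s a b. k \<ge> 1 \<Longrightarrow> h \<in> {1..H} \<Longrightarrow>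
       Q k h s a b = (1 - lr H k) * Q (k-1) h s a b
         + lr H k * (r h s a b + (\<Sum>s'\<in>UNIV. P h s a b s' *
              pay (Q k (h+1) s') (mu k (h+1) s') (nu k (h+1) s')))"
    and mu: "\<And>k h s. 1 \<le> k \<Longrightarrow> h \<in> {1..H} \<Longrightarrow> mu k h s \<in> Defs.simplex"
    and nu: "\<And>k h s. 1 \<le> k \<Longrightarrow> h \<in> {1..H} \<Longrightarrow> nu k h s \<in> Defs.simplex"
  shows "1 \<le> h \<Longrightarrow> h \<le> H + 1 \<Longrightarrow> 0 \<le> Q k h s a b \<and> Q k h s a b \<le> real H - real h + 1"
proof (induction k arbitrary: h s a b)
  case 0
  thus ?case using Q_last Q_init by (cases "h = H + 1") auto
next
  case (Suc k)
  have "\<forall>s a b. 0 \<le> Q (Suc k) h s a b \<and> Q (Suc k) h s a b \<le> real H - real h + 1"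
    using \<open>h \<le> H + 1\<close>
  proof (induction h rule: inc_induct)
    case base
    show ?case using Q_last by simp
  next
    case (step n)
    have n: "n \<in> {1..H}" using step.hyps Suc.prems by auto
    define V where "V s' = pay (Q (Suc k) (n + 1) s') (mu (Suc k) (n + 1) s') (nu (Suc k) (n + 1) s')" for s'
    have V: "0 \<le> V s' \<and> V s' \<le> real H - real n" for s'
    proof (cases "n = H")
      case False
      hence "n + 1 \<in> {1..H}" using n by simp
      thus ?thesis using step.IH mu nu unfolding V_def by (intro pay_bounds) auto
    qed (use Q_last in \<open>simp add: V_def pay_def\<close>)
    show ?case
    proof (intro allI)
      fix s a b
      have "P n s a b \<in> Defs.simplex" using P_nonneg[OF n] P_sum[OF n] by (simp add: Defs.simplex_def)
      hence "0 \<le> (\<Sum>s'\<in>UNIV. P n s a b s' * V s') \<and> (\<Sum>s'\<in>UNIV. P n s a b s' * V s') \<le> real H - real n"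
        using V by (rule simplex_average_bounds)
      hence next_value: "0 \<le> r n s a b + (\<Sum>s'\<in>UNIV. P n s a b s' * V s')
             \<and> r n s a b + (\<Sum>s'\<in>UNIV. P n s a b s' * V s') \<le> real H - real n + 1"
        using r_range[OF n, of s a b] by auto
      have "0 \<le> Q k n s a b \<and> Q k n s a b \<le> real H - real n + 1"
        using Suc.IH step.hyps Suc.prems by auto
      moreover have "0 \<le> lr H (Suc k)" "lr H (Suc k) \<le> 1" using lr_bounds[of "Suc k" H] by auto
      moreover have "Q (Suc k) n s a b = (1 - lr H (Suc k)) * Q k n s a b
                        + lr H (Suc k) * (r n s a b + (\<Sum>s'\<in>UNIV. P n s a b s' * V s'))"
        using Q_step[of "Suc k" n s a b] n by (simp add: V_def)
      ultimately show "0 \<le> Q (Suc k) n s a b \<and> Q (Suc k) n s a b \<le> real H - real n + 1"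
        using convex_comb_bounds[OF _ _ _ next_value] by simp
    qed
  qed
  thus ?case by blast
qed

lemma regmu_le:
  assumes "\<And>z. z \<in> Defs.simplex \<Longrightarrow>
      weighted_regret (wt k) k (\<lambda>t a. \<Sum>b\<in>UNIV. nu t h s b * Q t h s a b) (\<lambda>t. mu t h s) z \<le> c"
  shows "regmu wt Q mu nu k h s \<le> c"
proof -
  have "(\<Sum>t=1..k. wt k t * pay (Q t h s) z (nu t h s))
        \<le> c + (\<Sum>t=1..k. wt k t * pay (Q t h s) (mu t h s) (nu t h s))" if "z \<in> Defs.simplex" for z
    using assms[OF that] by (simp add: weighted_regret_def pay_eq_sum_rows right_diff_distrib sum_subtractf)
  hence "(SUP z\<in>Defs.simplex. \<Sum>t=1..k. wt k t * pay (Q t h s) z (nu t h s))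
        \<le> c + (\<Sum>t=1..k. wt k t * pay (Q t h s) (mu t h s) (nu t h s))"
    using uniform_in_simplex by (intro cSUP_least) auto
  thus ?thesis by (simp add: regmu_def)
qed

lemma regnu_le:
  assumes "\<And>z. z \<in> Defs.simplex \<Longrightarrow>
      weighted_regret (wt k) k (\<lambda>t b. - (\<Sum>a\<in>UNIV. mu t h s a * Q t h s a b)) (\<lambda>t. nu t h s) z \<le> c"
  shows "regnu wt Q mu nu k h s \<le> c"
proof -
  have "(\<Sum>t=1..k. wt k t * pay (Q t h s) (mu t h s) (nu t h s)) - c
        \<le> (\<Sum>t=1..k. wt k t * pay (Q t h s) (mu t h s) z)" if "z \<in> Defs.simplex" for z
    using assms[OF that]
    by (simp add: weighted_regret_def pay_eq_sum_cols right_diff_distrib sum_subtractf sum_negf)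
  hence "(\<Sum>t=1..k. wt k t * pay (Q t h s) (mu t h s) (nu t h s)) - c
        \<le> (INF z\<in>Defs.simplex. \<Sum>t=1..k. wt k t * pay (Q t h s) (mu t h s) z)"
    using uniform_in_simplex by (intro cINF_greatest) auto
  thus ?thesis by (simp add: regnu_def)
qed

lemma regmu_hedge_le:
  fixes Q :: "nat \<Rightarrow> nat \<Rightarrow> 's \<Rightarrow> 'a::finite \<Rightarrow> 'b::finite \<Rightarrow> real"
  assumes H: "1 \<le> H" and "0 < eta" and k: "1 \<le> k"
    and Q: "\<And>t a b. 1 \<le> t \<Longrightarrow> 0 \<le> Q t h s a b \<and> Q t h s a b \<le> real H"
    and nu: "\<And>t. 1 \<le> t \<Longrightarrow> nu t h s \<in> Defs.simplex"
    and mu: "\<And>t. 1 \<le> t \<Longrightarrow> mu t h s = hedge_policy eta (wgt H) (\<lambda>t a. \<Sum>b\<in>UNIV. nu t h s b * Q t h s a b) t"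
    and L: "ln (real CARD('a)) \<le> L"
  shows "regmu (lrw H) Q mu nu k h s \<le> (real H + 1) * L / (eta * real k) + eta * (real H)\<^sup>2 / 2"
proof (rule regmu_le)
  fix z :: "'a \<Rightarrow> real" assume z: "z \<in> Defs.simplex"
  define g where "g = (\<lambda>t a. \<Sum>b\<in>UNIV. nu t h s b * Q t h s a b)"
  have "0 \<le> g t a \<and> g t a \<le> 0 + real H" if "1 \<le> t" for t a
    using simplex_average_bounds[OF nu[OF that], where g = "\<lambda>b. Q t h s a b" and lo = 0 and hi = "real H"] Q[OF that]
    by (simp add: g_def)
  hence "weighted_regret (lrw H k) k g (hedge_policy eta (wgt H) g) z
         \<le> (real H + 1) * L / (eta * real k) + eta * (real H)\<^sup>2 / 2"
    by (rule lrw_hedge_regret_bound[OF H \<open>0 < eta\<close> k _ z L])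
  thus "weighted_regret (lrw H k) k g (\<lambda>t. mu t h s) z \<le> (real H + 1) * L / (eta * real k) + eta * (real H)\<^sup>2 / 2"
    by (subst weighted_regret_cong[where p' = "hedge_policy eta (wgt H) g"]) (auto simp: mu g_def)
qed

lemma regnu_hedge_le:
  fixes Q :: "nat \<Rightarrow> nat \<Rightarrow> 's \<Rightarrow> 'a::finite \<Rightarrow> 'b::finite \<Rightarrow> real"
  assumes H: "1 \<le> H" and "0 < eta" and k: "1 \<le> k"
    and Q: "\<And>t a b. 1 \<le> t \<Longrightarrow> 0 \<le> Q t h s a b \<and> Q t h s a b \<le> real H"
    and mu: "\<And>t. 1 \<le> t \<Longrightarrow> mu t h s \<in> Defs.simplex"
    and nu: "\<And>t. 1 \<le> t \<Longrightarrow> nu t h s = hedge_policy eta (wgt H) (\<lambda>t b. - (\<Sum>a\<in>UNIV. mu t h s a * Q t h s a b)) t"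
    and L: "ln (real CARD('b)) \<le> L"
  shows "regnu (lrw H) Q mu nu k h s \<le> (real H + 1) * L / (eta * real k) + eta * (real H)\<^sup>2 / 2"
proof (rule regnu_le)
  fix z :: "'b \<Rightarrow> real" assume z: "z \<in> Defs.simplex"
  define g where "g = (\<lambda>t b. - (\<Sum>a\<in>UNIV. mu t h s a * Q t h s a b))"
  have "- real H \<le> g t b \<and> g t b \<le> - real H + real H" if "1 \<le> t" for t b
    using simplex_average_bounds[OF mu[OF that], where g = "\<lambda>a. Q t h s a b" and lo = 0 and hi = "real H"] Q[OF that]
    by (simp add: g_def)
  hence "weighted_regret (lrw H k) k g (hedge_policy eta (wgt H) g) z
         \<le> (real H + 1) * L / (eta * real k) + eta * (real H)\<^sup>2 / 2"
    by (rule lrw_hedge_regret_bound[OF H \<open>0 < eta\<close> k _ z L])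
  thus "weighted_regret (lrw H k) k g (\<lambda>t. nu t h s) z \<le> (real H + 1) * L / (eta * real k) + eta * (real H)\<^sup>2 / 2"
    by (subst weighted_regret_cong[where p' = "hedge_policy eta (wgt H) g"]) (auto simp: nu g_def)
qed

lemma reg_le:
  "(\<And>s. regmu wt Q mu nu k h s \<le> c \<and> regnu wt Q mu nu k h s \<le> c) \<Longrightarrow> reg wt Q mu nu k h \<le> c"
  unfolding reg_def by (subst Max_le_iff) auto

lemma regbar_le:
  "(\<And>s. regmu wt Q mu nu k h s \<le> c \<and> regnu wt Q mu nu k h s \<le> c) \<Longrightarrow> regbar wt Q mu nu k h \<le> 2 * c"
  unfolding regbar_def by (subst Max_le_iff) (auto intro: add_mono[of _ c _ c, simplified])

lemma hedge_policy_eq_logit_mu: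
  "hedge_policy eta (wgt H) (\<lambda>t a. \<Sum>b\<in>UNIV. nu t h s b * Q t h s a b) k = softmax (logit_mu H eta Q nu k h s)"
  unfolding hedge_policy_def by (rule arg_cong[where f = softmax]) (simp add: fun_eq_iff logit_mu_def)

lemma hedge_policy_eq_logit_nu:
  "hedge_policy eta (wgt H) (\<lambda>t b. - (\<Sum>a\<in>UNIV. mu t h s a * Q t h s a b)) k = softmax (logit_nu H eta Q mu k h s)"
  unfolding hedge_policy_def by (rule arg_cong[where f = softmax]) (simp add: fun_eq_iff logit_nu_def sum_negf)

theorem mainTheorem11:
  fixes H :: nat and eta :: real
    and r :: "nat \<Rightarrow> 's::finite \<Rightarrow> 'a::finite \<Rightarrow> 'b::finite \<Rightarrow> real"
    and P :: "nat \<Rightarrow> 's \<Rightarrow> 'a \<Rightarrow> 'b \<Rightarrow> 's \<Rightarrow> real"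
    and Q :: "nat \<Rightarrow> nat \<Rightarrow> 's \<Rightarrow> 'a \<Rightarrow> 'b \<Rightarrow> real"
    and mu :: "nat \<Rightarrow> nat \<Rightarrow> 's \<Rightarrow> 'a \<Rightarrow> real"
    and nu :: "nat \<Rightarrow> nat \<Rightarrow> 's \<Rightarrow> 'b \<Rightarrow> real"
  assumes H: "H \<ge> 1"
    and eta: "eta > 0"
    and r_range: "\<And>h s a b. h \<in> {1..H} \<Longrightarrow> 0 \<le> r h s a b \<and> r h s a b \<le> 1"
    and P_nonneg: "\<And>h s a b s'. h \<in> {1..H} \<Longrightarrow> 0 \<le> P h s a b s'"
    and P_sum: "\<And>h s a b. h \<in> {1..H} \<Longrightarrow> (\<Sum>s'\<in>UNIV. P h s a b s') = 1"
    and Q_last: "\<And>k s a b. Q k (H+1) s a b = 0"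
    and Q_init: "\<And>h s a b. h \<in> {1..H} \<Longrightarrow> Q 0 h s a b = real H - real h + 1"
    and Q_step: "\<And>k h s a b. k \<ge> 1 \<Longrightarrow> h \<in> {1..H} \<Longrightarrow>
       Q k h s a b = (1 - lr H k) * Q (k-1) h s a b
         + lr H k * (r h s a b + (\<Sum>s'\<in>UNIV. P h s a b s' *
              pay (Q k (h+1) s') (mu k (h+1) s') (nu k (h+1) s')))"
    and mu_init: "\<And>h s a. h \<in> {1..H} \<Longrightarrow> mu 1 h s a = 1 / real (card (UNIV :: 'a set))"
    and nu_init: "\<And>h s b. h \<in> {1..H} \<Longrightarrow> nu 1 h s b = 1 / real (card (UNIV :: 'b set))"
    and mu_step: "\<And>k h s a. k \<ge> 2 \<Longrightarrow> h \<in> {1..H} \<Longrightarrow>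
       mu k h s a = exp (logit_mu H eta Q nu k h s a)
                    / (\<Sum>a'\<in>UNIV. exp (logit_mu H eta Q nu k h s a'))"
    and nu_step: "\<And>k h s b. k \<ge> 2 \<Longrightarrow> h \<in> {1..H} \<Longrightarrow>
       nu k h s b = exp (logit_nu H eta Q mu k h s b)
                    / (\<Sum>b'\<in>UNIV. exp (logit_nu H eta Q mu k h s b'))"
  shows "\<forall>k\<ge>1. \<forall>h\<in>{1..H}.
           reg (lrw H) Q mu nu k h
             \<le> (real H + 1) * max (ln (real (card (UNIV :: 'a set)))) (ln (real (card (UNIV :: 'b set)))) / (eta * real k)
               + eta * (real H)^2 / 2
         \<and> regbar (lrw H) Q mu nu k h
             \<le> 2 * ((real H + 1) * max (ln (real (card (UNIV :: 'a set)))) (ln (real (card (UNIV :: 'b set)))) / (eta * real k)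
               + eta * (real H)^2 / 2)"
proof (intro allI impI ballI)
  fix k h :: nat assume k: "1 \<le> k" and h: "h \<in> {1..H}"
  have mu_hedge: "mu t h s = hedge_policy eta (wgt H) (\<lambda>t a. \<Sum>b\<in>UNIV. nu t h s b * Q t h s a b) t"
    if "1 \<le> t" "h \<in> {1..H}" for t h s
    using mu_init[OF that(2)] mu_step[OF _ that(2)] that(1)
    by (intro eq_hedge_policy_if_uniform_start) (simp_all add: hedge_policy_eq_logit_mu softmax_def)
  have nu_hedge: "nu t h s = hedge_policy eta (wgt H) (\<lambda>t b. - (\<Sum>a\<in>UNIV. mu t h s a * Q t h s a b)) t"
    if "1 \<le> t" "h \<in> {1..H}" for t h s
    using nu_init[OF that(2)] nu_step[OF _ that(2)] that(1)
    by (intro eq_hedge_policy_if_uniform_start) (simp_all add: hedge_policy_eq_logit_nu softmax_def)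
  have mu_simplex: "mu t h s \<in> Defs.simplex" if "1 \<le> t" "h \<in> {1..H}" for t h s
    using mu_hedge[OF that] hedge_policy_in_simplex by simp
  have nu_simplex: "nu t h s \<in> Defs.simplex" if "1 \<le> t" "h \<in> {1..H}" for t h s
    using nu_hedge[OF that] hedge_policy_in_simplex by simp
  have Q_range: "0 \<le> Q t h s a b \<and> Q t h s a b \<le> real H" for t s a b
    using Q_bounds[OF r_range P_nonneg P_sum Q_last Q_init Q_step mu_simplex nu_simplex, of h t s a b] h
    by auto
  define L where "L = max (ln (real CARD('a))) (ln (real CARD('b)))"
  have "regmu (lrw H) Q mu nu k h s \<le> (real H + 1) * L / (eta * real k) + eta * (real H)\<^sup>2 / 2
      \<and> regnu (lrw H) Q mu nu k h s \<le> (real H + 1) * L / (eta * real k) + eta * (real H)\<^sup>2 / 2" for s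
    using regmu_hedge_le[where Q = Q and h = h and s = s and mu = mu and nu = nu and L = L,
            OF H eta k Q_range nu_simplex[OF _ h] mu_hedge[OF _ h]]
          regnu_hedge_le[where Q = Q and h = h and s = s and mu = mu and nu = nu and L = L,
            OF H eta k Q_range mu_simplex[OF _ h] nu_hedge[OF _ h]]
    by (simp add: L_def)
  thus "reg (lrw H) Q mu nu k h
          \<le> (real H + 1) * max (ln (real CARD('a))) (ln (real CARD('b))) / (eta * real k) + eta * (real H)\<^sup>2 / 2
      \<and> regbar (lrw H) Q mu nu k h
          \<le> 2 * ((real H + 1) * max (ln (real CARD('a))) (ln (real CARD('b))) / (eta * real k) + eta * (real H)\<^sup>2 / 2)"
    unfolding L_def by (blast intro: reg_le regbar_le)
qed

end
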